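(* There is no universal distributed algorithm that elects a leader for all feasible configurations of size $4$; that is, there is no pair $(D,f)$ of a DRIP $D$ and a decision function $f$ such that $(D,f)$ is a dedicated leader election algorithm for every feasible configuration with $4$ nodes.
   Context: Model. A configuration is a finite simple undirected connected graph $G$ in which each node $v$ is tagged with a non-negative integer $t_v$ (wakeup tag); size = number of nodes. Nodes are anonymous and communicate in synchronous global rounds. A node $v$ wakes up in the first global round $r\le t_v$ in which it receives a message, if any, and otherwise in global round $t_v$; its local clock is $0$ in its wakeup round, it acts from local round $1$, and nodes do not know the global clock. In each round a node transmits a message to all neighbours, listens, or terminates. A listening node receives $M$ if exactly one neighbour transmits ($M$), hears collision noise (distinct from silence and messages) if at least two neighbours transmit, and silence otherwise; a transmitting node hears nothing. The history $\mathcal H_v[i]$ of $v$ in local round $i$ is $(\emptyset)$ (transmitted, silence, or spontaneous wakeup at $i=0$), $(M)$ (received $M$, or woken by $M$ at $i=0$), or $( * )$ (collision). A DRIP is a function $D$ from finite history vectors to $\{\mathit{listen},\mathit{transmit}(M),\mathit{terminate}\}$; each node $v$ in local round $i\ge1$ performs $D(\mathcal H_v[0\ldots i-1])$, and every node eventually terminates permanently (first at local round $done_v$). A decision function $f$ maps $\mathcal H_v[0\ldots done_v]$ to $\{0,1\}$; $(D,f)$ is a dedicated leader election algorithm for $G$ if, when all nodes of $G$ execute $D$, exactly one node gets output $1$; $G$ is feasible if such a pair exists. *)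

theory Defs
  imports Main
begin

(* Radio-network model of the paper.  Nodes are named by natural numbers (names are
   invisible to the algorithm), messages are natural numbers. *)

datatype 'm hent = HEmpty | HMsg 'm | HColl

datatype 'm act = Listen | Transmit 'm | Terminate

datatype 'm nstate = Asleep | Awake "'m hent list" | Done "'m hent list"

type_synonym drip = "nat hent list \<Rightarrow> nat act"

(* a decision function maps H[0..done] to {0,1}; True encodes output 1 *)
type_synonym decision = "nat hent list \<Rightarrow> bool"

definition config :: "nat set \<Rightarrow> (nat \<Rightarrow> nat \<Rightarrow> bool) \<Rightarrow> bool" where
  "config V E \<longleftrightarrow> finite V \<and> V \<noteq> {} \<and>
     (\<forall>u v. E u v \<longrightarrow> u \<in> V \<and> v \<in> V \<and> u \<noteq> v \<and> E v u) \<and>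
     (\<forall>u\<in>V. \<forall>v\<in>V. E\<^sup>*\<^sup>* u v)"

definition tx :: "drip \<Rightarrow> (nat \<Rightarrow> nat nstate) \<Rightarrow> nat \<Rightarrow> nat option" where
  "tx D s u = (case s u of
      Awake h \<Rightarrow> (case D h of Transmit m \<Rightarrow> Some m | _ \<Rightarrow> None)
    | _ \<Rightarrow> None)"

definition heard :: "drip \<Rightarrow> (nat \<Rightarrow> nat \<Rightarrow> bool) \<Rightarrow> (nat \<Rightarrow> nat nstate) \<Rightarrow> nat \<Rightarrow> nat hent" where
  "heard D E s v =
     (let T = {u. E v u \<and> tx D s u \<noteq> None} in
      if card T = 0 then HEmpty
      else if card T = 1 then HMsg (the (tx D s (the_elem T)))
      else HColl)"

(* one global round r: s = states after round r-1 (all Asleep before round 0) *)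
definition step :: "drip \<Rightarrow> (nat \<Rightarrow> nat \<Rightarrow> bool) \<Rightarrow> (nat \<Rightarrow> nat) \<Rightarrow> nat
                     \<Rightarrow> (nat \<Rightarrow> nat nstate) \<Rightarrow> nat \<Rightarrow> nat nstate" where
  "step D E t r s v = (case s v of
      Asleep \<Rightarrow>
        (case heard D E s v of
           HMsg m \<Rightarrow> (if r \<le> t v then Awake [HMsg m] else Asleep)
         | _ \<Rightarrow> (if r = t v then Awake [HEmpty] else Asleep))
    | Awake h \<Rightarrow>
        (case D h of
           Listen \<Rightarrow> Awake (h @ [heard D E s v])
         | Transmit m \<Rightarrow> Awake (h @ [HEmpty])
         | Terminate \<Rightarrow> Done (h @ [HEmpty]))
    | Done h \<Rightarrow> Done h)"

fun exec :: "drip \<Rightarrow> (nat \<Rightarrow> nat \<Rightarrow> bool) \<Rightarrow> (nat \<Rightarrow> nat) \<Rightarrow> nat \<Rightarrow> nat \<Rightarrow> nat nstate" where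
  "exec D E t 0 = step D E t 0 (\<lambda>_. Asleep)"
| "exec D E t (Suc r) = step D E t (Suc r) (exec D E t r)"

definition elects :: "drip \<Rightarrow> decision \<Rightarrow> nat set \<Rightarrow> (nat \<Rightarrow> nat \<Rightarrow> bool) \<Rightarrow> (nat \<Rightarrow> nat) \<Rightarrow> bool" where
  "elects D f V E t \<longleftrightarrow>
     (\<exists>r hs. (\<forall>v\<in>V. exec D E t r v = Done (hs v)) \<and> card {v\<in>V. f (hs v)} = 1)"

definition feasible :: "nat set \<Rightarrow> (nat \<Rightarrow> nat \<Rightarrow> bool) \<Rightarrow> (nat \<Rightarrow> nat) \<Rightarrow> bool" where
  "feasible V E t \<longleftrightarrow> (\<exists>D f. elects D f V E t)"

end

theory Submission
  imports Defs
begin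

(* K4 with node 3 waking at round 1, and the diamond K4 - {2,3} with nodes 3 and 2 waking at
   rounds a \<ge> 1 and b \<ge> a + 3, are feasible: in a dedicated algorithm the nodes 0, 1, which wake
   at round 0, transmit simultaneously once, so that node 3 alone hears a collision.
   Let D be a universal algorithm.  If D, run on silence, terminates in local round L, take the
   diamond with a = L + 1 and b = L + 4: the twins 0, 1 finish in silence before 2 and 3 wake,
   and these then run in silence too, so all four histories coincide and no single node can
   output 1.  Otherwise D must elect on K4, finishing by some round R.  In the diamond with
   a = 1 and b = R + 4, nodes 0, 1, 3 cannot tell the difference (node 2 is asleep, and the
   twins 0, 1 never deliver a message to it), so they terminate by round R; node 2 then wakes
   into eternal silence and never terminates. *)

definition reception :: "drip \<Rightarrow> (nat \<Rightarrow> nat nstate) \<Rightarrow> nat list \<Rightarrow> nat hent" where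
  "reception D s us = (case filter (\<lambda>u. tx D s u \<noteq> None) us of
      [] \<Rightarrow> HEmpty | [u] \<Rightarrow> HMsg (the (tx D s u)) | _ \<Rightarrow> HColl)"

lemma heard_eq_reception:
  assumes "distinct us" and "\<And>u. E v u \<Longrightarrow> u \<in> set us"
  shows "heard D E s v = reception D s (filter (E v) us)"
proof -
  let ?T = "filter (\<lambda>u. tx D s u \<noteq> None) (filter (E v) us)"
  have T: "{u. E v u \<and> tx D s u \<noteq> None} = set ?T" using assms(2) by auto
  have card_T: "card (set ?T) = length ?T" by (rule distinct_card) (simp add: assms(1))
  consider "?T = []" | u where "?T = [u]" | u u' us' where "?T = u # u' # us'"
    by (metis list.exhaust)
  then show ?thesis
    unfolding heard_def Let_def T reception_def by cases (use card_T in simp_all)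
qed

lemma heard_all_asleep: "heard D E (\<lambda>_. Asleep) v = HEmpty"
  by (simp add: heard_def tx_def)

lemma heard_silent:
  assumes "\<And>u. E v u \<Longrightarrow> tx D s u = None"
  shows "heard D E s v = HEmpty"
proof -
  have T: "{u. E v u \<and> tx D s u \<noteq> None} = {}" using assms by auto
  show ?thesis unfolding heard_def Let_def T by simp
qed

lemma reception_twins: "tx D s u = tx D s v \<Longrightarrow> reception D s [u, v] \<noteq> HMsg m"
  by (cases "tx D s u") (simp_all add: reception_def)

lemma heard_cong:
  assumes "\<And>u. E v u \<Longrightarrow> tx D s u = tx D s' u"
  shows "heard D E s v = heard D E s' v"
proof -
  have T: "{u. E v u \<and> tx D s u \<noteq> None} = {u. E v u \<and> tx D s' u \<noteq> None}"
    using assms by auto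
  have "tx D s (the_elem {u. E v u \<and> tx D s u \<noteq> None}) = tx D s' (the_elem {u. E v u \<and> tx D s u \<noteq> None})"
    if "card {u. E v u \<and> tx D s u \<noteq> None} = 1"
  proof -
    from that obtain x where "{u. E v u \<and> tx D s u \<noteq> None} = {x}" by (rule card_1_singletonE)
    then show ?thesis using assms by auto
  qed
  then show ?thesis unfolding heard_def Let_def T by simp
qed

lemma step_eq:
  assumes "s v = s' v'" and "t v = t' v'"
    and "tx D s v = None \<Longrightarrow> heard D E s v = heard D E' s' v'"
  shows "step D E t r s v = step D E' t' r s' v'"
proof (cases "s v")
  case Asleep
  then have "tx D s v = None" by (simp add: tx_def)
  show ?thesis unfolding step_def assms(1,2) assms(3)[OF \<open>tx D s v = None\<close>] by (rule refl)
next
  case (Awake h)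
  show ?thesis
  proof (cases "D h")
    case Listen
    then have "tx D s v = None" using Awake by (simp add: tx_def)
    show ?thesis unfolding step_def assms(1,2) assms(3)[OF \<open>tx D s v = None\<close>] by (rule refl)
  qed (use Awake assms(1) in \<open>simp_all add: step_def\<close>)
next
  case (Done h)
  then show ?thesis using assms(1) by (simp add: step_def)
qed

lemma step_cong:
  assumes "s v = s' v" and "\<And>u. E v u \<Longrightarrow> s u = s' u"
  shows "step D E t r s v = step D E t r s' v"
proof (rule step_eq)
  show "heard D E s v = heard D E s' v" by (rule heard_cong) (simp add: tx_def assms(2))
qed (simp_all add: assms(1))

lemma exec_eqI:
  assumes closed: "\<And>u v. v \<in> V \<Longrightarrow> E v u \<Longrightarrow> u \<in> V"
    and base: "\<And>v. v \<in> V \<Longrightarrow> step D E t 0 (\<lambda>_. Asleep) v = S 0 v"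
    and step: "\<And>r v. v \<in> V \<Longrightarrow> step D E t (Suc r) (S r) v = S (Suc r) v"
  shows "v \<in> V \<Longrightarrow> exec D E t r v = S r v"
proof (induction r arbitrary: v)
  case 0
  then show ?case using base by simp
next
  case (Suc r)
  have "exec D E t (Suc r) v = step D E t (Suc r) (exec D E t r) v" by simp
  also have "\<dots> = step D E t (Suc r) (S r) v"
    by (rule step_cong) (use Suc closed in auto)
  also have "\<dots> = S (Suc r) v" using step Suc.prems .
  finally show ?case .
qed

lemma exec_twins:
  assumes "t u = t v" and "\<not> E u u" and "\<not> E v v"
    and "\<And>x. x \<noteq> u \<Longrightarrow> x \<noteq> v \<Longrightarrow> E u x \<longleftrightarrow> E v x"
  shows "exec D E t r u = exec D E t r v"
proof -
  have "step D E t r s u = step D E t r s v" if "s u = s v" for r s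
  proof (rule step_eq)
    show "s u = s v" "t u = t v" by fact+
    assume "tx D s u = None"
    moreover from this have "tx D s v = None" using that by (simp add: tx_def)
    ultimately have "{x. E u x \<and> tx D s x \<noteq> None} = {x. E v x \<and> tx D s x \<noteq> None}"
      using assms(2-4) by (metis (lifting))
    then show "heard D E s u = heard D E s v" by (simp add: heard_def)
  qed
  then show ?thesis by (induction r) simp_all
qed

lemma exec_Done_mono:
  assumes "exec D E t r v = Done h" and "r \<le> r'"
  shows "exec D E t r' v = Done h"
  using assms(2)
proof (induction r' rule: dec_induct)
  case (step n)
  then show ?case by (simp add: step_def)
qed (use assms(1) in simp)

definition hist :: "(nat \<Rightarrow> nat hent) \<Rightarrow> nat \<Rightarrow> nat hent list" where
  "hist h k = map h [0..<k]"

lemma length_hist [simp]: "length (hist h k) = k"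
  by (simp add: hist_def)

lemma hist_Suc: "hist h (Suc k) = hist h k @ [h k]"
  by (simp add: hist_def)

lemma hist_one [simp]: "hist h (Suc 0) = [h 0]"
  by (simp add: hist_def)

lemma hist_const: "hist (\<lambda>_. x) k = replicate k x"
  by (simp add: hist_def map_replicate_const)

definition node_state :: "nat \<Rightarrow> nat \<Rightarrow> (nat \<Rightarrow> nat hent) \<Rightarrow> nat \<Rightarrow> nat nstate" where
  "node_state L w h r =
     (if r < w then Asleep
      else if r < w + L then Awake (hist h (Suc (r - w)))
      else Done (hist h (Suc L)))"

definition runs_for :: "drip \<Rightarrow> (nat \<Rightarrow> nat hent) \<Rightarrow> nat \<Rightarrow> bool" where
  "runs_for D h L \<longleftrightarrow> 0 < L \<and> h 0 = HEmpty \<and>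
     (\<forall>j. 0 < j \<and> j < L \<longrightarrow> D (hist h j) \<noteq> Terminate) \<and>
     D (hist h L) = Terminate \<and>
     (\<forall>j. 0 < j \<and> j \<le> L \<and> D (hist h j) \<noteq> Listen \<longrightarrow> h j = HEmpty)"

lemma step0_node_state:
  assumes "runs_for D h L"
  shows "step D E t 0 (\<lambda>_. Asleep) v = node_state L (t v) h 0"
  using assms by (simp add: step_def heard_all_asleep node_state_def runs_for_def)

lemma step_node_state:
  assumes script: "runs_for D h L" and sv: "s v = node_state L (t v) h r"
    and asleep: "r < t v \<Longrightarrow> \<forall>m. heard D E s v \<noteq> HMsg m"
    and listening: "t v \<le> r \<Longrightarrow> r < t v + L \<Longrightarrow> D (hist h (Suc (r - t v))) = Listen \<Longrightarrow>
      heard D E s v = h (Suc (r - t v))"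
  shows "step D E t (Suc r) s v = node_state L (t v) h (Suc r)"
proof -
  let ?w = "t v"
  consider "r < ?w" | "?w \<le> r" "Suc r < ?w + L" | "Suc r = ?w + L" | "?w + L \<le> r"
    by linarith
  then show ?thesis
  proof cases
    case 1
    then show ?thesis using asleep script sv
      by (cases "heard D E s v") (auto simp: step_def node_state_def runs_for_def)
  next
    case 2
    define k where "k = Suc (r - ?w)"
    have sv': "s v = Awake (hist h k)" using sv 2 by (simp add: node_state_def k_def)
    have next_state: "node_state L ?w h (Suc r) = Awake (hist h k @ [h k])"
      using 2 by (simp add: node_state_def k_def hist_Suc Suc_diff_le)
    have "D (hist h k) \<noteq> Terminate" using script 2 by (simp add: runs_for_def k_def)
    moreover have "h k = HEmpty" if "D (hist h k) \<noteq> Listen"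
      using script 2 that by (simp add: runs_for_def k_def)
    ultimately show ?thesis using 2 sv' listening next_state
      by (cases "D (hist h k)") (simp_all add: step_def k_def)
  next
    case 3
    moreover have "0 < L" using script by (simp add: runs_for_def)
    ultimately have "Suc (r - t v) = L" by linarith
    then have "s v = Awake (hist h L)" using sv 3 by (simp add: node_state_def)
    then show ?thesis using 3 script by (simp add: step_def node_state_def runs_for_def hist_Suc)
  next
    case 4
    then show ?thesis using sv by (simp add: step_def node_state_def)
  qed
qed

lemma exec_node_state:
  fixes h :: "nat \<Rightarrow> nat \<Rightarrow> nat hent" and t :: "nat \<Rightarrow> nat" and L :: nat
  defines "S \<equiv> \<lambda>r u. node_state L (t u) (h u) r"
  assumes closed: "\<And>u v. v \<in> V \<Longrightarrow> E v u \<Longrightarrow> u \<in> V"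
    and scripts: "\<And>v. v \<in> V \<Longrightarrow> runs_for D (h v) L"
    and asleep: "\<And>r v m. v \<in> V \<Longrightarrow> r < t v \<Longrightarrow> heard D E (S r) v \<noteq> HMsg m"
    and listening: "\<And>r v. v \<in> V \<Longrightarrow> t v \<le> r \<Longrightarrow> r < t v + L \<Longrightarrow>
      D (hist (h v) (Suc (r - t v))) = Listen \<Longrightarrow> heard D E (S r) v = h v (Suc (r - t v))"
    and "v \<in> V"
  shows "exec D E t r v = S r v"
  using closed _ _ \<open>v \<in> V\<close>
proof (rule exec_eqI)
  show "step D E t 0 (\<lambda>_. Asleep) v = S 0 v" if "v \<in> V" for v
    unfolding S_def using scripts[OF that] by (rule step0_node_state)
  show "step D E t (Suc r) (S r) v = S (Suc r) v" if "v \<in> V" for r v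
  proof -
    have "step D E t (Suc r) (S r) v = node_state L (t v) (h v) (Suc r)"
    proof (rule step_node_state[OF scripts[OF that]])
      show "S r v = node_state L (t v) (h v) r" by (simp add: S_def)
    qed (use asleep[OF that] listening[OF that] in auto)
    then show ?thesis by (simp add: S_def)
  qed
qed

lemma tx_node_state_inactive:
  "s u = node_state L w h r \<Longrightarrow> r < w \<or> w + L \<le> r \<Longrightarrow> tx D s u = None"
  by (auto simp: tx_def node_state_def)

lemma node_state_final: "w + L \<le> r \<Longrightarrow> node_state L w h r = Done (hist h (Suc L))"
  by (simp add: node_state_def)

definition K4 :: "nat \<Rightarrow> nat \<Rightarrow> bool" where
  "K4 u v \<longleftrightarrow> u < 4 \<and> v < 4 \<and> u \<noteq> v"

definition diamond :: "nat \<Rightarrow> nat \<Rightarrow> bool" where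
  "diamond u v \<longleftrightarrow> K4 u v \<and> {u, v} \<noteq> {2, 3}"

definition tags :: "nat \<Rightarrow> nat \<Rightarrow> nat \<Rightarrow> nat" where
  "tags a b v = (if v = 3 then a else if v = 2 then b else 0)"

lemma diamond_iff: "diamond u v \<longleftrightarrow> u < 4 \<and> v < 4 \<and> u \<noteq> v \<and> (u < 2 \<or> v < 2)"
  by (auto simp: diamond_def K4_def doubleton_eq_iff)

lemma rtranclp_via_hub:
  assumes "u \<in> V" "v \<in> V" "x \<in> V" and hub: "\<And>y. y \<in> V \<Longrightarrow> y \<noteq> x \<Longrightarrow> E x y \<and> E y x"
  shows "E\<^sup>*\<^sup>* u v"
proof -
  have "E\<^sup>*\<^sup>* u x" using hub[of u] \<open>u \<in> V\<close> by (cases "u = x") auto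
  moreover have "E\<^sup>*\<^sup>* x v" using hub[of v] \<open>v \<in> V\<close> by (cases "v = x") auto
  ultimately show ?thesis by (rule rtranclp_trans)
qed

lemma config_K4: "config {..<4} K4"
proof -
  have "K4\<^sup>*\<^sup>* u v" if "u < 4" "v < 4" for u v
    by (rule rtranclp_via_hub[where x = 0 and V = "{..<4}"]) (use that in \<open>auto simp: K4_def\<close>)
  then show ?thesis by (auto simp: config_def K4_def lessThan_empty_iff)
qed

lemma config_diamond: "config {..<4} diamond"
proof -
  have "diamond\<^sup>*\<^sup>* u v" if "u < 4" "v < 4" for u v
    by (rule rtranclp_via_hub[where x = 0 and V = "{..<4}"])
      (use that in \<open>auto simp: diamond_iff\<close>)
  then show ?thesis by (auto simp: config_def diamond_iff lessThan_empty_iff)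
qed

lemma heard_K4: "heard D K4 s v = reception D s (filter (K4 v) [0, 1, 2, 3])"
  by (rule heard_eq_reception) (auto simp: K4_def)

lemma heard_diamond: "heard D diamond s v = reception D s (filter (diamond v) [0, 1, 2, 3])"
  by (rule heard_eq_reception) (auto simp: diamond_iff)

(* With tags a b and n = a + 2, the twins
   0 and 1 transmit together in global round a + 2, which node 3 hears as a collision in its
   local round 2 (the stream alarm); no other node records a collision. *)
definition collision_alg :: "nat \<Rightarrow> drip" where
  "collision_alg n h = (if length h = n then Transmit 0 else if n < length h then Terminate else Listen)"

definition saw_collision :: decision where
  "saw_collision h \<longleftrightarrow> HColl \<in> set h"

definition alarm :: "nat \<Rightarrow> nat hent" where
  "alarm i = (if i = 2 then HColl else HEmpty)"

lemma runs_for_collision_alg: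
  assumes "0 < n" and "h 0 = HEmpty" and "\<And>j. n \<le> j \<Longrightarrow> h j = HEmpty"
  shows "runs_for (collision_alg n) h (n + 1)"
  using assms by (auto simp: runs_for_def collision_alg_def)

lemma tx_collision_alg:
  assumes "0 < n" and "s u = node_state (n + 1) w h r"
  shows "tx (collision_alg n) s u = (if Suc r = w + n then Some 0 else None)"
  using assms by (auto simp: tx_def node_state_def collision_alg_def)

lemma exec_collision_alg_diamond:
  assumes "1 \<le> a" and "a + 3 \<le> b" and "v < 4"
  shows "exec (collision_alg (a + 2)) diamond (tags a b) r v =
    node_state (a + 3) (tags a b v) (if v = 3 then alarm else (\<lambda>_. HEmpty)) r"
  (is "_ = node_state _ _ (?h v) _")
proof (rule exec_node_state[where V = "{..<4}"])
  let ?S = "\<lambda>r u. node_state (a + 3) (tags a b u) (?h u) r"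
  have tx: "tx (collision_alg (a + 2)) (?S r) u = (if Suc r = tags a b u + (a + 2) then Some 0 else None)" for r u
    by (rule tx_collision_alg[where h = "?h u"]) (simp_all add: eval_nat_numeral)
  show "u \<in> {..<4}" if "v \<in> {..<4}" "diamond v u" for u v
    using that by (simp add: diamond_iff)
  show "runs_for (collision_alg (a + 2)) (?h v) (a + 3)" for v
    using runs_for_collision_alg[of "a + 2"] assms(1) by (simp add: alarm_def eval_nat_numeral)
  show "heard (collision_alg (a + 2)) diamond (?S r) v \<noteq> HMsg m"
    if "v \<in> {..<4}" "r < tags a b v" for r v m
  proof -
    have "v = 2 \<or> v = 3" using that by (auto simp: tags_def split: if_splits)
    then have "filter (diamond v) [0, 1, 2, 3] = [0, 1]"
      by (auto simp: diamond_iff)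
    moreover have "tx (collision_alg (a + 2)) (?S r) 0 = tx (collision_alg (a + 2)) (?S r) 1"
      by (simp add: tx_def tags_def)
    ultimately show ?thesis by (simp add: heard_diamond reception_twins)
  qed
  show "heard (collision_alg (a + 2)) diamond (?S r) v = ?h v (Suc (r - tags a b v))"
    if "v \<in> {..<4}" "tags a b v \<le> r"
      "collision_alg (a + 2) (hist (?h v) (Suc (r - tags a b v))) = Listen" for r v
  proof -
    let ?D = "collision_alg (a + 2)"
    have window: "r \<le> tags a b v + a"
      using that(2,3) by (auto simp: collision_alg_def split: if_splits)
    show ?thesis
    proof (cases "v = 3")
      case True
      then have "heard ?D diamond (?S r) v = reception ?D (?S r) [0, 1]"
        by (simp add: heard_diamond diamond_iff)
      moreover have "tx ?D (?S r) 0 = (if r = a + 1 then Some 0 else None)"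
        and "tx ?D (?S r) 1 = (if r = a + 1 then Some 0 else None)"
        unfolding tx by (simp_all add: tags_def)
      ultimately show ?thesis using True that(2)
        by (cases "r = a + 1") (simp_all add: reception_def tags_def alarm_def)
    next
      case False
      with \<open>v \<in> {..<4}\<close> have v: "v = 0 \<or> v = 1 \<or> v = 2" by auto
      have "tx ?D (?S r) u = None" if "diamond v u" for u
      proof -
        have "tags a b v = 0 \<or> v = 2 \<and> tags a b u = 0"
          using that v by (auto simp: diamond_iff tags_def)
        moreover have "tags a b u \<in> {0, a, b}" by (simp add: tags_def)
        ultimately have "Suc r \<noteq> tags a b u + (a + 2)"
          using window \<open>tags a b v \<le> r\<close> assms(1,2) v by (auto simp: tags_def)
        then show ?thesis unfolding tx by simp
      qed
      then show ?thesis using False by (simp add: heard_silent)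
    qed
  qed
qed (use assms in auto)

lemma exec_collision_alg_K4:
  assumes "v < 4"
  shows "exec (collision_alg 3) K4 (tags 1 0) r v =
    node_state 4 (tags 1 0 v) (if v = 3 then alarm else (\<lambda>_. HEmpty)) r"
  (is "_ = node_state _ _ (?h v) _")
proof (rule exec_node_state[where V = "{..<4}"])
  let ?D = "collision_alg 3" and ?S = "\<lambda>r u. node_state 4 (tags 1 0 u) (?h u) r"
  have tx: "tx ?D (?S r) u = (if Suc r = tags 1 0 u + 3 then Some 0 else None)" for r u
    by (rule tx_collision_alg[where h = "?h u"]) simp_all
  show "u \<in> {..<4}" if "v \<in> {..<4}" "K4 v u" for u v
    using that by (simp add: K4_def)
  show "runs_for ?D (?h v) 4" for v
    using runs_for_collision_alg[of 3] by (simp add: alarm_def)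
  show "heard ?D K4 (?S r) v \<noteq> HMsg m" if "v \<in> {..<4}" "r < tags 1 0 v" for r v m
  proof -
    have "r = 0" using that by (simp add: tags_def split: if_splits)
    then have "tx ?D (?S r) u = None" for u unfolding tx by (simp add: tags_def)
    then show ?thesis by (simp add: heard_silent)
  qed
  show "heard ?D K4 (?S r) v = ?h v (Suc (r - tags 1 0 v))"
    if "v \<in> {..<4}" "tags 1 0 v \<le> r" "?D (hist (?h v) (Suc (r - tags 1 0 v))) = Listen" for r v
  proof -
    have window: "r \<le> tags 1 0 v + 1"
      using that(3) by (auto simp: collision_alg_def split: if_splits)
    show ?thesis
    proof (cases "v = 3")
      case True
      then have "heard ?D K4 (?S r) v = reception ?D (?S r) [0, 1, 2]"
        by (simp add: heard_K4 K4_def)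
      moreover have "tx ?D (?S r) u = (if r = 2 then Some 0 else None)" if "u < 3" for u
        using that unfolding tx by (simp add: tags_def)
      ultimately show ?thesis using True that(2) window
        by (cases "r = 2") (simp_all add: reception_def tags_def alarm_def)
    next
      case False
      then have "tx ?D (?S r) u = None" for u
        using window unfolding tx by (simp add: tags_def)
      then show ?thesis using False by (simp add: heard_silent)
    qed
  qed
qed (use assms in auto)

lemma electsI:
  assumes "\<And>v. v \<in> V \<Longrightarrow> exec D E t r v = Done (hs v)" and "card {v \<in> V. f (hs v)} = 1"
  shows "elects D f V E t"
  using assms unfolding elects_def by blast

lemma saw_collision_hist: "saw_collision (hist h k) \<longleftrightarrow> (\<exists>i<k. h i = HColl)"
  by (force simp: saw_collision_def hist_def)

lemma feasible_diamond:
  assumes "1 \<le> a" and "a + 3 \<le> b"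
  shows "feasible {..<4} diamond (tags a b)"
proof -
  let ?h = "\<lambda>v::nat. if v = 3 then alarm else (\<lambda>_. HEmpty)"
  have run: "exec (collision_alg (a + 2)) diamond (tags a b) (b + a + 3) v =
    Done (hist (?h v) (a + 4))" if "v \<in> {..<4}" for v
    using exec_collision_alg_diamond[OF assms] node_state_final that assms
    by (simp add: tags_def add.commute)
  have leader: "{v \<in> {..<4}. saw_collision (hist (?h v) (a + 4))} = {3}"
    by (auto simp: saw_collision_hist alarm_def)
  have "elects (collision_alg (a + 2)) saw_collision {..<4} diamond (tags a b)"
    by (rule electsI[OF run]) (simp_all only: leader, simp)
  then show ?thesis unfolding feasible_def by blast
qed

lemma feasible_K4: "feasible {..<4} K4 (tags 1 0)"
proof -
  let ?h = "\<lambda>v::nat. if v = 3 then alarm else (\<lambda>_. HEmpty)"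
  have run: "exec (collision_alg 3) K4 (tags 1 0) 5 v = Done (hist (?h v) 5)"
    if "v \<in> {..<4}" for v
    using exec_collision_alg_K4 node_state_final that by (simp add: tags_def)
  have leader: "{v \<in> {..<4}. saw_collision (hist (?h v) 5)} = {3}"
    by (auto simp: saw_collision_hist alarm_def)
  have "elects (collision_alg 3) saw_collision {..<4} K4 (tags 1 0)"
    by (rule electsI[OF run]) (simp_all only: leader, simp)
  then show ?thesis unfolding feasible_def by blast
qed

lemma silent_termination_not_elects:
  assumes script: "runs_for D (\<lambda>_. HEmpty) L"
  shows "\<not> elects D f {..<4} diamond (tags (L + 1) (L + 4))"
proof
  let ?t = "tags (L + 1) (L + 4)"
  let ?S = "\<lambda>r u. node_state L (?t u) (\<lambda>_. HEmpty) r"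
  have run: "exec D diamond ?t r v = ?S r v" if "v \<in> {..<4}" for r v
  proof (rule exec_node_state[where V = "{..<4}" and h = "\<lambda>_ _. HEmpty", OF _ script _ _ that])
    show "u \<in> {..<4}" if "v \<in> {..<4}" "diamond v u" for u v
      using that by (simp add: diamond_iff)
    show "heard D diamond (?S r) v \<noteq> HMsg m" if "v \<in> {..<4}" "r < ?t v" for r v m
    proof -
      have "v = 2 \<or> v = 3" using that by (auto simp: tags_def split: if_splits)
      then have "filter (diamond v) [0, 1, 2, 3] = [0, 1]"
        by (auto simp: diamond_iff)
      moreover have "tx D (?S r) 0 = tx D (?S r) 1" by (simp add: tx_def tags_def)
      ultimately show ?thesis by (simp add: heard_diamond reception_twins)
    qed
    show "heard D diamond (?S r) v = HEmpty"
      if "v \<in> {..<4}" "?t v \<le> r" "r < ?t v + L" "D (hist (\<lambda>_. HEmpty) (Suc (r - ?t v))) = Listen"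
      for r v
    proof (rule heard_silent)
      fix u assume "diamond v u"
      show "tx D (?S r) u = None"
      proof (cases "?t u = ?t v")
        case True
        then have "?S r u = ?S r v" by simp
        then show ?thesis using that(2-4) by (simp add: tx_def node_state_def)
      next
        case False
        then have "r < ?t u \<or> ?t u + L \<le> r"
          using that(2,3) \<open>diamond v u\<close> by (auto simp: diamond_iff tags_def split: if_splits)
        then show ?thesis by (rule tx_node_state_inactive[OF refl])
      qed
    qed
  qed
  assume "elects D f {..<4} diamond ?t"
  then obtain r hs where final: "\<forall>v\<in>{..<4}. exec D diamond ?t r v = Done (hs v)"
    and one: "card {v \<in> {..<4}. f (hs v)} = 1"
    unfolding elects_def by blast
  have "hs v = hist (\<lambda>_. HEmpty) (Suc L)" if "v \<in> {..<4}" for v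
  proof -
    from final that have "exec D diamond ?t r v = Done (hs v)" by blast
    then have "node_state L (?t v) (\<lambda>_. HEmpty) r = Done (hs v)" by (simp only: run[OF that])
    then show ?thesis by (simp add: node_state_def split: if_splits)
  qed
  then have "{v \<in> {..<4}. f (hs v)} = (if f (hist (\<lambda>_. HEmpty) (Suc L)) then {..<4} else {})"
    by auto
  then show False using one by (simp split: if_splits)
qed

lemma exec_K4_twins: "u < 3 \<Longrightarrow> exec D K4 (tags a 0) r u = exec D K4 (tags a 0) r 0"
  by (cases "u = 0") (auto intro: exec_twins simp: K4_def tags_def)

lemma exec_diamond_twins: "exec D diamond (tags a b) r 1 = exec D diamond (tags a b) r 0"
  by (rule exec_twins) (auto simp: diamond_iff tags_def)

lemma diamond_mirrors_K4:
  assumes "r < b"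
  shows "exec D diamond (tags 1 b) r 0 = exec D K4 (tags 1 0) r 0 \<and>
    exec D diamond (tags 1 b) r 3 = exec D K4 (tags 1 0) r 3 \<and>
    exec D diamond (tags 1 b) r 2 = Asleep"
  using assms
proof (induction r)
  case 0
  have "step D diamond (tags 1 b) 0 (\<lambda>_. Asleep) v = step D K4 (tags 1 0) 0 (\<lambda>_. Asleep) v"
    if "v = 0 \<or> v = 3" for v
    by (rule step_eq) (use that in \<open>auto simp: tags_def heard_all_asleep\<close>)
  moreover have "step D diamond (tags 1 b) 0 (\<lambda>_. Asleep) 2 = Asleep"
    using 0 by (simp add: step_def heard_all_asleep tags_def)
  ultimately show ?case by simp
next
  case (Suc r)
  let ?sG = "exec D diamond (tags 1 b) r" and ?sK = "exec D K4 (tags 1 0) r"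
  have IH: "?sG 0 = ?sK 0" "?sG 3 = ?sK 3" "?sG 2 = Asleep" using Suc by auto
  have twins: "?sG 1 = ?sK 0" "?sK 1 = ?sK 0" "?sK 2 = ?sK 0"
    using IH(1) exec_diamond_twins exec_K4_twins[of 1] exec_K4_twins[of 2] by simp_all
  have tx_same: "tx D ?sG 0 = tx D ?sK 0" "tx D ?sG 1 = tx D ?sK 0" "tx D ?sK 1 = tx D ?sK 0"
    "tx D ?sK 2 = tx D ?sK 0" "tx D ?sG 3 = tx D ?sK 3"
    using IH twins by (simp_all add: tx_def)
  have tx_asleep: "tx D ?sG 2 = None" using IH(3) by (simp add: tx_def)
  have "step D diamond (tags 1 b) (Suc r) ?sG 0 = step D K4 (tags 1 0) (Suc r) ?sK 0"
  proof (rule step_eq)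
    assume "tx D ?sG 0 = None"
    then show "heard D diamond ?sG 0 = heard D K4 ?sK 0"
      using tx_same tx_asleep by (simp add: heard_diamond heard_K4 diamond_iff K4_def reception_def)
  qed (use IH in \<open>simp_all add: tags_def\<close>)
  moreover have "step D diamond (tags 1 b) (Suc r) ?sG 3 = step D K4 (tags 1 0) (Suc r) ?sK 3"
  proof (rule step_eq)
    show "heard D diamond ?sG 3 = heard D K4 ?sK 3"
      using tx_same
      by (cases "tx D ?sK 0") (simp_all add: heard_diamond heard_K4 diamond_iff K4_def reception_def)
  qed (use IH in \<open>simp_all add: tags_def\<close>)
  moreover have "step D diamond (tags 1 b) (Suc r) ?sG 2 = Asleep"
  proof -
    have "heard D diamond ?sG 2 = reception D ?sG [0, 1]"
      by (simp add: heard_diamond diamond_iff)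
    moreover have "reception D ?sG [0, 1] \<noteq> HMsg m" for m
      using tx_same by (simp add: reception_twins)
    ultimately show ?thesis using IH(3) Suc.prems
      by (cases "heard D diamond ?sG 2") (simp_all add: step_def tags_def)
  qed
  ultimately show ?case by simp
qed

lemma no_silent_termination_not_elects:
  assumes silent: "\<And>j. 0 < j \<Longrightarrow> D (replicate j HEmpty) \<noteq> Terminate"
    and "elects D f {..<4} K4 (tags 1 0)"
  shows "\<exists>b\<ge>4. \<not> elects D f {..<4} diamond (tags 1 b)"
proof -
  obtain R hs where "\<forall>v\<in>{..<4}. exec D K4 (tags 1 0) R v = Done (hs v)"
    using assms(2) unfolding elects_def by blast
  then have K4_done: "exec D K4 (tags 1 0) R 0 = Done (hs 0)" by simp
  \<comment> \<open>b \<ge> 4 keeps the configuration feasible; b > R + 1 lets nodes 0, 1 finish before 2 wakes.\<close>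
  define b where "b = Suc (R + 3)"
  let ?sG = "exec D diamond (tags 1 b)"
  have hub_done: "?sG r u = Done (hs 0)" if "R \<le> r" "u < 2" for r u
  proof -
    have "?sG R 0 = Done (hs 0)" using diamond_mirrors_K4[of R b] K4_done by (simp add: b_def)
    then have "?sG r 0 = Done (hs 0)" using that(1) by (rule exec_Done_mono)
    then show ?thesis using that(2) exec_diamond_twins[of D 1 b r] by (auto simp: less_2_cases_iff)
  qed
  have silence: "heard D diamond (?sG r) 2 = HEmpty" if "R \<le> r" for r
    by (rule heard_silent) (use hub_done[OF that] in \<open>auto simp: diamond_iff tx_def\<close>)
  have late: "?sG r 2 = Awake (replicate (Suc (r - b)) HEmpty)" if "b \<le> r" for r
    using that
  proof (induction r rule: dec_induct)
    case base
    have "?sG (R + 3) 2 = Asleep" using diamond_mirrors_K4[of "R + 3" b] by (simp add: b_def)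
    have "?sG b 2 = step D diamond (tags 1 b) b (?sG (R + 3)) 2"
      by (simp only: b_def exec.simps(2))
    also have "\<dots> = Awake [HEmpty]"
      using \<open>?sG (R + 3) 2 = Asleep\<close> silence[of "R + 3"] by (simp add: step_def tags_def)
    finally show ?case by simp
  next
    case (step r)
    have "D (replicate (Suc (r - b)) HEmpty) \<noteq> Terminate" by (rule silent) simp
    moreover have "R \<le> r" using step.hyps by (simp add: b_def)
    ultimately show ?case using step.IH silence[of r] step.hyps
      by (cases "D (replicate (Suc (r - b)) HEmpty)")
        (simp_all add: step_def Suc_diff_le replicate_append_same)
  qed
  have "\<not> elects D f {..<4} diamond (tags 1 b)"
  proof
    assume "elects D f {..<4} diamond (tags 1 b)"
    then obtain r hs' where "\<forall>v\<in>{..<4}. ?sG r v = Done (hs' v)" unfolding elects_def by blast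
    then have "?sG r 2 = Done (hs' 2)" by simp
    then show False using diamond_mirrors_K4[of r b] late[of r] by (cases "r < b") auto
  qed
  moreover have "4 \<le> b" by (simp add: b_def)
  ultimately show ?thesis by blast
qed

theorem proposition4:
  shows "\<not> (\<exists>(D::drip) (f::decision). \<forall>V E t.
            config V E \<and> card V = 4 \<and> feasible V E t \<longrightarrow> elects D f V E t)"
proof
  assume "\<exists>(D::drip) (f::decision). \<forall>V E t.
            config V E \<and> card V = 4 \<and> feasible V E t \<longrightarrow> elects D f V E t"
  then obtain D f where universal: "\<And>V E t. config V E \<Longrightarrow> card V = 4 \<Longrightarrow> feasible V E t \<Longrightarrow>
      elects D f V E t"
    by blast
  have on_diamond: "elects D f {..<4} diamond (tags a b)" if "1 \<le> a" "a + 3 \<le> b" for a b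
    using universal[OF config_diamond _ feasible_diamond[OF that]] by simp
  show False
  proof (cases "\<exists>L>0. D (replicate L HEmpty) = Terminate")
    case True
    define L where "L = (LEAST L. 0 < L \<and> D (replicate L HEmpty) = Terminate)"
    have "0 < L \<and> D (replicate L HEmpty) = Terminate"
      unfolding L_def using True by (rule LeastI_ex)
    moreover have "D (replicate j HEmpty) \<noteq> Terminate" if "0 < j" "j < L" for j
      using that not_less_Least unfolding L_def by blast
    ultimately have "runs_for D (\<lambda>_. HEmpty) L" by (auto simp: runs_for_def hist_const)
    then show False using silent_termination_not_elects on_diamond[of "L + 1" "L + 4"] by simp
  next
    case False
    have "elects D f {..<4} K4 (tags 1 0)" using universal[OF config_K4 _ feasible_K4] by simp
    moreover have "D (replicate j HEmpty) \<noteq> Terminate" if "0 < j" for j using False that by blast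
    ultimately obtain b where "4 \<le> b" "\<not> elects D f {..<4} diamond (tags 1 b)"
      using no_silent_termination_not_elects by blast
    then show False using on_diamond[of 1 b] by simp
  qed
qed

end
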